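(* Let $G=(U\sqcup V,E)$ be a bipartite graph with integer weights $w:E\to\mathbb{Z}$ that has a perfect matching, let $P=(\pi,p)$ be an optimal solution of the dual assignment program $\max \sum_{u\in U}\pi(u)+\sum_{v\in V}p(v)$ subject to $\pi(u)+p(v)\le w(uv)$ for all $uv\in E$, and let $E_p\subseteq E$. Let $G_{cs}(P)$ be the spanning subgraph of $G$ with edge set $E_{cs}(P)=\{uv\in E:\pi(u)+p(v)=w(uv)\}$, and define $w_p:E_{cs}(P)\to\{0,1\}$ by $w_p(e)=0$ if $e\in E_p$ and $w_p(e)=1$ if $e\notin E_p$. If $M$ is a minimum weight perfect matching of $\{G_{cs}(P),w_p\}$, then $M$ is a minimum weight perfect matching of $\{G,w\}$ and $|M\cap E_p|\ge|M'\cap E_p|$ for every minimum weight perfect matching $M'$ of $\{G,w\}$.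
   Context: A matching is a set of pairwise vertex-disjoint edges; it is perfect if it covers all vertices. For a weight function $c$ on the edges of a graph $H$, the weight of a matching $M$ is $\sum_{e\in M}c(e)$, and a minimum weight perfect matching of $\{H,c\}$ is a perfect matching of $H$ of minimum weight. The dual assignment program is the linear-programming dual of the assignment linear program $\min\sum_{uv}x(uv)w(uv)$ subject to each vertex having total incident $x$-value $1$ and $x\ge0$. *)

theory Defs
  imports Complex_Main
begin

definition bipartite_graph :: "'a set \<Rightarrow> 'a set \<Rightarrow> ('a \<times> 'a) set \<Rightarrow> bool" where
  "bipartite_graph U V E \<longleftrightarrow> finite U \<and> finite V \<and> U \<inter> V = {} \<and> E \<subseteq> U \<times> V"

definition matching :: "('a \<times> 'a) set \<Rightarrow> ('a \<times> 'a) set \<Rightarrow> bool" where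
  "matching F M \<longleftrightarrow> M \<subseteq> F \<and>
     (\<forall>e\<in>M. \<forall>e'\<in>M. e \<noteq> e' \<longrightarrow> fst e \<noteq> fst e' \<and> snd e \<noteq> snd e')"

definition perfect_matching :: "'a set \<Rightarrow> 'a set \<Rightarrow> ('a \<times> 'a) set \<Rightarrow> ('a \<times> 'a) set \<Rightarrow> bool" where
  "perfect_matching U V F M \<longleftrightarrow> matching F M \<and>
     (\<forall>u\<in>U. \<exists>e\<in>M. fst e = u) \<and> (\<forall>v\<in>V. \<exists>e\<in>M. snd e = v)"

definition matching_weight :: "('a \<times> 'a \<Rightarrow> int) \<Rightarrow> ('a \<times> 'a) set \<Rightarrow> int" where
  "matching_weight c M = (\<Sum>e\<in>M. c e)"

definition min_weight_perfect_matching ::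
  "'a set \<Rightarrow> 'a set \<Rightarrow> ('a \<times> 'a) set \<Rightarrow> ('a \<times> 'a \<Rightarrow> int) \<Rightarrow> ('a \<times> 'a) set \<Rightarrow> bool" where
  "min_weight_perfect_matching U V F c M \<longleftrightarrow> perfect_matching U V F M \<and>
     (\<forall>M'. perfect_matching U V F M' \<longrightarrow> matching_weight c M \<le> matching_weight c M')"

definition dual_feasible ::
  "('a \<times> 'a) set \<Rightarrow> ('a \<times> 'a \<Rightarrow> int) \<Rightarrow> ('a \<Rightarrow> real) \<Rightarrow> ('a \<Rightarrow> real) \<Rightarrow> bool" where
  "dual_feasible E w \<pi> p \<longleftrightarrow> (\<forall>(u, v)\<in>E. \<pi> u + p v \<le> real_of_int (w (u, v)))"

definition dual_objective :: "'a set \<Rightarrow> 'a set \<Rightarrow> ('a \<Rightarrow> real) \<Rightarrow> ('a \<Rightarrow> real) \<Rightarrow> real" where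
  "dual_objective U V \<pi> p = (\<Sum>u\<in>U. \<pi> u) + (\<Sum>v\<in>V. p v)"

definition dual_optimal ::
  "'a set \<Rightarrow> 'a set \<Rightarrow> ('a \<times> 'a) set \<Rightarrow> ('a \<times> 'a \<Rightarrow> int) \<Rightarrow> ('a \<Rightarrow> real) \<Rightarrow> ('a \<Rightarrow> real) \<Rightarrow> bool" where
  "dual_optimal U V E w \<pi> p \<longleftrightarrow> dual_feasible E w \<pi> p \<and>
     (\<forall>\<pi>' p'. dual_feasible E w \<pi>' p' \<longrightarrow> dual_objective U V \<pi>' p' \<le> dual_objective U V \<pi> p)"

definition cs_edges ::
  "('a \<times> 'a) set \<Rightarrow> ('a \<times> 'a \<Rightarrow> int) \<Rightarrow> ('a \<Rightarrow> real) \<Rightarrow> ('a \<Rightarrow> real) \<Rightarrow> ('a \<times> 'a) set" where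
  "cs_edges E w \<pi> p = {(u, v) \<in> E. \<pi> u + p v = real_of_int (w (u, v))}"

definition pref_weight :: "('a \<times> 'a) set \<Rightarrow> 'a \<times> 'a \<Rightarrow> int" where
  "pref_weight Ep e = (if e \<in> Ep then 0 else 1)"

end

theory Submission
  imports Defs
begin

text \<open>For a feasible dual (\<pi>, p), every perfect matching M satisfies
  w(M) = \<Sum>u \<pi> u + \<Sum>v p v + \<Sum>e\<in>M slack(e) with nonnegative slacks, so the dual objective is a
  lower bound, attained exactly by the perfect matchings using only tight edges. Hence M is of
  minimum weight, and the minimum weight perfect matchings of G are precisely the perfect
  matchings of G_cs(P). All of them have |U| edges, so minimising w_p(M) = |M| - |M \<inter> E_p| over
  them maximises |M \<inter> E_p|. Only feasibility of (\<pi>, p) is needed: the perfect matching M of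
  G_cs(P) itself certifies optimality of the dual and existence of a perfect matching of G.\<close>

lemma perfect_matching_subset: "perfect_matching U V F M \<Longrightarrow> M \<subseteq> F"
  unfolding perfect_matching_def matching_def by blast

lemma perfect_matching_mono:
  "perfect_matching U V F M \<Longrightarrow> M \<subseteq> F' \<Longrightarrow> perfect_matching U V F' M"
  unfolding perfect_matching_def matching_def by blast

lemma perfect_matching_bij_betw:
  assumes "bipartite_graph U V F" "perfect_matching U V F M"
  shows "bij_betw fst M U" and "bij_betw snd M V"
proof -
  have M_sub: "M \<subseteq> U \<times> V"
    using assms perfect_matching_subset unfolding bipartite_graph_def by blast
  have disj: "\<forall>e\<in>M. \<forall>e'\<in>M. e \<noteq> e' \<longrightarrow> fst e \<noteq> fst e' \<and> snd e \<noteq> snd e'"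
    and cover: "\<forall>u\<in>U. \<exists>e\<in>M. fst e = u" "\<forall>v\<in>V. \<exists>e\<in>M. snd e = v"
    using assms(2) unfolding perfect_matching_def matching_def by blast+
  have "inj_on fst M" "inj_on snd M"
    using disj by (meson inj_onI)+
  moreover have "fst ` M = U" "snd ` M = V"
    using M_sub cover by (auto simp: image_iff)
  ultimately show "bij_betw fst M U" "bij_betw snd M V"
    by (simp_all add: bij_betw_def)
qed

lemma finite_perfect_matching:
  assumes "bipartite_graph U V F" "perfect_matching U V F M"
  shows "finite M"
  using bij_betw_finite[OF perfect_matching_bij_betw(1)[OF assms]] assms(1)
  unfolding bipartite_graph_def by simp

lemma card_perfect_matching:
  assumes "bipartite_graph U V F" "perfect_matching U V F M"
  shows "card M = card U"
  using perfect_matching_bij_betw(1)[OF assms] by (rule bij_betw_same_card)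

lemma sum_potentials_perfect_matching:
  assumes "bipartite_graph U V F" "perfect_matching U V F M"
  shows "(\<Sum>e\<in>M. \<pi> (fst e) + p (snd e)) = dual_objective U V \<pi> p"
  using sum.reindex_bij_betw[OF perfect_matching_bij_betw(1)[OF assms], of \<pi>]
    sum.reindex_bij_betw[OF perfect_matching_bij_betw(2)[OF assms], of p]
  by (simp add: sum.distrib dual_objective_def)

lemma matching_weight_eq_dual_objective_plus_slack:
  assumes "bipartite_graph U V E" "perfect_matching U V E M"
  shows "real_of_int (matching_weight w M) =
    dual_objective U V \<pi> p + (\<Sum>e\<in>M. real_of_int (w e) - (\<pi> (fst e) + p (snd e)))"
  using sum_potentials_perfect_matching[OF assms, of \<pi> p]
  by (simp add: matching_weight_def sum_subtractf)

lemma slack_nonneg: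
  "dual_feasible E w \<pi> p \<Longrightarrow> e \<in> E \<Longrightarrow> 0 \<le> real_of_int (w e) - (\<pi> (fst e) + p (snd e))"
  unfolding dual_feasible_def by (cases e) auto

lemma weak_duality:
  assumes "bipartite_graph U V E" "perfect_matching U V E M" "dual_feasible E w \<pi> p"
  shows "dual_objective U V \<pi> p \<le> real_of_int (matching_weight w M)"
proof -
  have "0 \<le> (\<Sum>e\<in>M. real_of_int (w e) - (\<pi> (fst e) + p (snd e)))"
    using perfect_matching_subset[OF assms(2)] by (intro sum_nonneg slack_nonneg[OF assms(3)]) blast
  then show ?thesis
    using matching_weight_eq_dual_objective_plus_slack[OF assms(1,2), of w \<pi> p] by simp
qed

lemma matching_weight_eq_dual_objective_iff:
  assumes "bipartite_graph U V E" "perfect_matching U V E M" "dual_feasible E w \<pi> p"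
  shows "real_of_int (matching_weight w M) = dual_objective U V \<pi> p \<longleftrightarrow>
    M \<subseteq> cs_edges E w \<pi> p"
proof -
  have M_sub: "M \<subseteq> E"
    using assms(2) by (rule perfect_matching_subset)
  have "real_of_int (matching_weight w M) = dual_objective U V \<pi> p \<longleftrightarrow>
      (\<Sum>e\<in>M. real_of_int (w e) - (\<pi> (fst e) + p (snd e))) = 0"
    using matching_weight_eq_dual_objective_plus_slack[OF assms(1,2), of w \<pi> p] by simp
  also have "\<dots> \<longleftrightarrow> (\<forall>e\<in>M. real_of_int (w e) - (\<pi> (fst e) + p (snd e)) = 0)"
    using finite_perfect_matching[OF assms(1,2)] slack_nonneg[OF assms(3)] M_sub
    by (intro sum_nonneg_eq_0_iff) auto
  also have "\<dots> \<longleftrightarrow> M \<subseteq> cs_edges E w \<pi> p"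
    using M_sub unfolding cs_edges_def by auto
  finally show ?thesis .
qed

lemma matching_weight_pref_weight:
  assumes "finite M"
  shows "matching_weight (pref_weight Ep) M = int (card M) - int (card (M \<inter> Ep))"
proof -
  have "matching_weight (pref_weight Ep) M = (\<Sum>e\<in>M. 1 - (if e \<in> Ep then 1 else 0))"
    unfolding matching_weight_def pref_weight_def by (rule sum.cong) auto
  also have "\<dots> = int (card M) - int (card (M \<inter> Ep))"
    using assms by (simp add: sum_subtractf sum.If_cases)
  finally show ?thesis .
qed

theorem proposition3p9:
  fixes U V :: "'a set" and E Ep M :: "('a \<times> 'a) set" and w :: "'a \<times> 'a \<Rightarrow> int"
    and \<pi> p :: "'a \<Rightarrow> real"
  assumes "bipartite_graph U V E"
    and "\<exists>M0. perfect_matching U V E M0"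
    and "dual_optimal U V E w \<pi> p"
    and "Ep \<subseteq> E"
    and "min_weight_perfect_matching U V (cs_edges E w \<pi> p) (pref_weight Ep) M"
  shows "min_weight_perfect_matching U V E w M \<and>
    (\<forall>M'. min_weight_perfect_matching U V E w M' \<longrightarrow> card (M' \<inter> Ep) \<le> card (M \<inter> Ep))"
proof -
  let ?C = "cs_edges E w \<pi> p"
  have G: "bipartite_graph U V E" and feas: "dual_feasible E w \<pi> p"
    using assms(1,3) unfolding dual_optimal_def by blast+
  have pmC: "perfect_matching U V ?C M"
    using assms(5) unfolding min_weight_perfect_matching_def by blast
  have pm: "perfect_matching U V E M"
    using perfect_matching_subset[OF pmC] by (intro perfect_matching_mono[OF pmC]) (auto simp: cs_edges_def)
  have opt: "real_of_int (matching_weight w M) = dual_objective U V \<pi> p"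
    using perfect_matching_subset[OF pmC] by (simp add: matching_weight_eq_dual_objective_iff[OF G pm feas])
  have min: "min_weight_perfect_matching U V E w M"
    unfolding min_weight_perfect_matching_def
  proof (intro conjI allI impI pm)
    fix M' assume "perfect_matching U V E M'"
    then show "matching_weight w M \<le> matching_weight w M'"
      using weak_duality[OF G _ feas] opt by fastforce
  qed
  have "card (M' \<inter> Ep) \<le> card (M \<inter> Ep)" if "min_weight_perfect_matching U V E w M'" for M'
  proof -
    have pm': "perfect_matching U V E M'" and "matching_weight w M' \<le> matching_weight w M"
      using that pm unfolding min_weight_perfect_matching_def by blast+
    then have "real_of_int (matching_weight w M') = dual_objective U V \<pi> p"
      using weak_duality[OF G pm' feas] opt by linarith
    then have "perfect_matching U V ?C M'"
      using matching_weight_eq_dual_objective_iff[OF G pm' feas] perfect_matching_mono[OF pm'] by blast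
    then have "matching_weight (pref_weight Ep) M \<le> matching_weight (pref_weight Ep) M'"
      using assms(5) unfolding min_weight_perfect_matching_def by blast
    moreover have "card M' = card M"
      using card_perfect_matching[OF G] pm pm' by simp
    ultimately show ?thesis
      using finite_perfect_matching[OF G pm] finite_perfect_matching[OF G pm']
      by (simp add: matching_weight_pref_weight)
  qed
  with min show ?thesis by blast
qed

end
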